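(* Let $M := \langle X \mid R\rangle$, and suppose that the set $Y := \{x\in X \mid \exists\, a,b,c\in\langle X\rangle \text{ such that } (axb,c)\in R \text{ or } (c,axb)\in R\}$ is finite. Then the following are equivalent: (1) There exists $a\in\langle X\rangle$ such that $\mathsf{Z}_M(a)$ is infinite. (2) There exists $a\in\langle X\rangle$ such that $\mathsf{L}_M(a)$ is infinite. (3) There exists $k\in\mathbb{N}$ such that $\mathcal{U}_k(M)$ is infinite (equivalently $\rho_k(M)=\infty$). (4) There exists $k\in\mathbb{N}$ such that $\mathcal{U}_n(M)$ is infinite (equivalently $\rho_n(M)=\infty$) for all $n\ge k$.
   Context: For a set $X$, $\langle X\rangle$ is the free monoid on $X$ (identity $1$); $M=\langle X\mid R\rangle$ is the monoid presented by generators $X$ and relations $R\subseteq\langle X\rangle\times\langle X\rangle$. $|a|$ is word length; $a=_M b$ means equal images in $M$. $\mathsf{Z}_M(a) := \{b\in\langle X\rangle : b=_M a\}$, $\mathsf{L}_M(a) := \{|b| : b\in\mathsf{Z}_M(a)\}$, $\mathcal{L}(M):=\{\mathsf{L}_M(a): a\in\langle X\rangle\}$. For $k\in\mathbb{N}$, $\mathcal{U}_k(M) := \bigcup\{L\in\mathcal{L}(M) : k\in L\}$ and, when nonempty, $\rho_k(M) := \sup\mathcal{U}_k(M)\in\mathbb{N}\cup\{\infty\}$. *)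

theory Defs
  imports Main
begin

text \<open>Words over the generating set X are lists in lists X; the free monoid is
  (lists X, @, []). A presentation is given by X and R with R \<subseteq> lists X \<times> lists X.\<close>

definition pres_step :: "('x list \<times> 'x list) set \<Rightarrow> ('x list \<times> 'x list) set" where
  "pres_step R = {(u @ l @ v, u @ r @ v) | u l r v. (l, r) \<in> R}"

text \<open>The monoid congruence generated by R: equal images in M.\<close>
definition pres_eq :: "('x list \<times> 'x list) set \<Rightarrow> 'x list \<Rightarrow> 'x list \<Rightarrow> bool" where
  "pres_eq R a b \<longleftrightarrow> (a, b) \<in> (pres_step R \<union> (pres_step R)\<inverse>)\<^sup>*"

definition factZ :: "'x set \<Rightarrow> ('x list \<times> 'x list) set \<Rightarrow> 'x list \<Rightarrow> 'x list set" where
  "factZ X R a = {b \<in> lists X. pres_eq R b a}"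

definition lenL :: "'x set \<Rightarrow> ('x list \<times> 'x list) set \<Rightarrow> 'x list \<Rightarrow> nat set" where
  "lenL X R a = length ` factZ X R a"

definition sysL :: "'x set \<Rightarrow> ('x list \<times> 'x list) set \<Rightarrow> nat set set" where
  "sysL X R = lenL X R ` lists X"

definition unionU :: "'x set \<Rightarrow> ('x list \<times> 'x list) set \<Rightarrow> nat \<Rightarrow> nat set" where
  "unionU X R k = \<Union> {L \<in> sysL X R. k \<in> L}"

end

theory Submission
  imports Defs
begin

text \<open>Only the finitely many letters occurring in R take part in rewriting steps, so every
  word equal in M to a word a is spelled with the letters of a and of R; with bounded length
  there are only finitely many such words, which gives (1) \<longleftrightarrow> (2). Collapsing all letters
  outside R to a single one can only enlarge length sets, so the union of the length sets of
  the words of length k is a finite union of length sets, finite if all of them are: this is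
  (3) \<longrightarrow> (2). Padding a word with n copies of a letter shifts its length set by n, so a single
  infinite length set makes every union beyond its length infinite: (2) \<longrightarrow> (4).\<close>

definition rel_letters :: "('x list \<times> 'x list) set \<Rightarrow> 'x set" where
  "rel_letters R = (\<Union>(l, r)\<in>R. set l \<union> set r)"

lemma pres_eq_refl: "pres_eq R a a"
  by (simp add: pres_eq_def)

lemma pres_eq_sym: "pres_eq R a b \<Longrightarrow> pres_eq R b a"
  unfolding pres_eq_def by (meson sym_Un_converse sym_rtrancl symD)

lemma pres_eq_trans: "pres_eq R a b \<Longrightarrow> pres_eq R b c \<Longrightarrow> pres_eq R a c"
  unfolding pres_eq_def by (meson rtrancl_trans)

lemma pres_eq_image:
  assumes "\<And>b c. (b, c) \<in> pres_step R \<Longrightarrow> (g b, g c) \<in> pres_step R"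
    and "pres_eq R a b"
  shows "pres_eq R (g a) (g b)"
  using assms(2) unfolding pres_eq_def
proof (induction rule: rtrancl_induct)
  case base
  show ?case by simp
next
  case (step b c)
  then have "(g b, g c) \<in> pres_step R \<union> (pres_step R)\<inverse>"
    using assms(1) by blast
  with step.IH show ?case by (rule rtrancl_into_rtrancl)
qed

lemma pres_eq_append:
  assumes "pres_eq R a b"
  shows "pres_eq R (a @ w) (b @ w)"
proof (rule pres_eq_image[where g = "\<lambda>x. x @ w", OF _ assms])
  fix b c assume "(b, c) \<in> pres_step R"
  then obtain u l r v where "b = u @ l @ v" "c = u @ r @ v" "(l, r) \<in> R"
    unfolding pres_step_def by blast
  then have "b @ w = u @ l @ (v @ w)" "c @ w = u @ r @ (v @ w)" "(l, r) \<in> R"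
    by simp_all
  then show "(b @ w, c @ w) \<in> pres_step R"
    unfolding pres_step_def by blast
qed

lemma pres_eq_map:
  assumes "\<forall>x\<in>rel_letters R. f x = x" and "pres_eq R a b"
  shows "pres_eq R (map f a) (map f b)"
proof (rule pres_eq_image[where g = "map f", OF _ assms(2)])
  fix b c assume "(b, c) \<in> pres_step R"
  then obtain u l r v where uv: "b = u @ l @ v" "c = u @ r @ v" and lr: "(l, r) \<in> R"
    unfolding pres_step_def by blast
  have "map f l = l" "map f r = r"
    using assms(1) lr unfolding rel_letters_def by (force intro: map_idI)+
  with uv have "map f b = map f u @ l @ map f v" "map f c = map f u @ r @ map f v"
    by simp_all
  with lr show "(map f b, map f c) \<in> pres_step R"
    unfolding pres_step_def by blast
qed

lemma set_subset_if_pres_eq: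
  assumes "pres_eq R a b"
  shows "set b \<subseteq> set a \<union> rel_letters R"
  using assms unfolding pres_eq_def
proof (induction rule: rtrancl_induct)
  case base
  show ?case by simp
next
  case (step b c)
  then have "set c \<subseteq> set b \<union> rel_letters R"
    unfolding pres_step_def rel_letters_def by force
  with step.IH show ?case by blast
qed

lemma rel_letters_subset:
  assumes "R \<subseteq> lists X \<times> lists X"
  shows "rel_letters R \<subseteq> {x \<in> X. \<exists>a \<in> lists X. \<exists>b \<in> lists X. \<exists>c \<in> lists X.
                 (a @ [x] @ b, c) \<in> R \<or> (c, a @ [x] @ b) \<in> R}"
proof
  fix x assume "x \<in> rel_letters R"
  then obtain l r where lr: "(l, r) \<in> R" and x: "x \<in> set l \<or> x \<in> set r"
    unfolding rel_letters_def by auto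
  have "l \<in> lists X" "r \<in> lists X"
    using lr assms by auto
  from x show "x \<in> {x \<in> X. \<exists>a \<in> lists X. \<exists>b \<in> lists X. \<exists>c \<in> lists X.
                 (a @ [x] @ b, c) \<in> R \<or> (c, a @ [x] @ b) \<in> R}"
  proof (elim disjE)
    assume "x \<in> set l"
    then obtain u v where "l = u @ [x] @ v" by (metis append_Cons append_Nil split_list)
    then show ?thesis using lr \<open>l \<in> lists X\<close> \<open>r \<in> lists X\<close> by auto
  next
    assume "x \<in> set r"
    then obtain u v where "r = u @ [x] @ v" by (metis append_Cons append_Nil split_list)
    then show ?thesis using lr \<open>l \<in> lists X\<close> \<open>r \<in> lists X\<close> by auto
  qed
qed

lemma finite_factZ_iff_finite_lenL:
  assumes "finite (rel_letters R)"
  shows "finite (factZ X R a) \<longleftrightarrow> finite (lenL X R a)"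
proof
  assume "finite (factZ X R a)"
  then show "finite (lenL X R a)"
    unfolding lenL_def by (rule finite_imageI)
next
  assume "finite (lenL X R a)"
  then obtain N where N: "\<forall>m\<in>lenL X R a. m \<le> N"
    using finite_nat_set_iff_bounded_le by blast
  have "factZ X R a \<subseteq> {b. set b \<subseteq> set a \<union> rel_letters R \<and> length b \<le> N}"
    using N set_subset_if_pres_eq pres_eq_sym
    unfolding factZ_def lenL_def by fastforce
  moreover have "finite {b. set b \<subseteq> set a \<union> rel_letters R \<and> length b \<le> N}"
    using assms by (simp add: finite_lists_length_le)
  ultimately show "finite (factZ X R a)"
    by (rule finite_subset)
qed

lemma length_in_lenL: "a \<in> lists X \<Longrightarrow> length a \<in> lenL X R a"
  unfolding lenL_def factZ_def using pres_eq_refl by blast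

lemma lenL_cong:
  assumes "pres_eq R a b"
  shows "lenL X R a = lenL X R b"
  using assms pres_eq_sym pres_eq_trans unfolding lenL_def factZ_def by blast

lemma unionU_eq_UN_lenL:
  "unionU X R k = (\<Union>c\<in>{c \<in> lists X. length c = k}. lenL X R c)"
proof
  show "unionU X R k \<subseteq> (\<Union>c\<in>{c \<in> lists X. length c = k}. lenL X R c)"
  proof
    fix m assume "m \<in> unionU X R k"
    then obtain a where "k \<in> lenL X R a" "m \<in> lenL X R a"
      unfolding unionU_def sysL_def by auto
    moreover from \<open>k \<in> lenL X R a\<close> obtain c
      where "c \<in> lists X" "pres_eq R c a" "length c = k"
      unfolding lenL_def factZ_def by auto
    ultimately have "c \<in> {c \<in> lists X. length c = k}" "m \<in> lenL X R c"
      using lenL_cong[of R c a X] by auto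
    then show "m \<in> (\<Union>c\<in>{c \<in> lists X. length c = k}. lenL X R c)"
      by blast
  qed
next
  have "lenL X R c \<subseteq> unionU X R (length c)" if "c \<in> lists X" for c
    using that length_in_lenL[OF that] unfolding unionU_def sysL_def by auto
  then show "(\<Union>c\<in>{c \<in> lists X. length c = k}. lenL X R c) \<subseteq> unionU X R k"
    by auto
qed

lemma lenL_subset_lenL_map:
  assumes "\<forall>x\<in>rel_letters R. f x = x" and "f ` X \<subseteq> X"
  shows "lenL X R c \<subseteq> lenL X R (map f c)"
proof
  fix m assume "m \<in> lenL X R c"
  then obtain d where "d \<in> lists X" "pres_eq R d c" "m = length d"
    unfolding lenL_def factZ_def by auto
  moreover have "map f d \<in> lists X"
    using \<open>d \<in> lists X\<close> assms(2) by (auto simp: image_subset_iff)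
  moreover have "pres_eq R (map f d) (map f c)"
    using pres_eq_map[OF assms(1) \<open>pres_eq R d c\<close>] .
  ultimately have "map f d \<in> factZ X R (map f c)" "m = length (map f d)"
    unfolding factZ_def by simp_all
  then show "m \<in> lenL X R (map f c)"
    unfolding lenL_def by blast
qed

lemma finite_unionU:
  assumes "rel_letters R \<subseteq> X" and "finite (rel_letters R)"
    and "\<forall>a\<in>lists X. finite (lenL X R a)"
  shows "finite (unionU X R k)"
proof -
  let ?S = "rel_letters R"
  define z where "z = (SOME z. z \<in> X - ?S)"
  define f where "f x = (if x \<in> ?S then x else z)" for x
  let ?W = "{w \<in> lists X. set w \<subseteq> ?S \<union> {z} \<and> length w = k}"
  have fX: "f x \<in> X" if "x \<in> X" for x
    using that assms(1) some_in_eq[of "X - ?S"] unfolding f_def z_def by auto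
  have fS: "\<forall>x\<in>?S. f x = x"
    by (simp add: f_def)
  have "lenL X R c \<subseteq> \<Union> (lenL X R ` ?W)" if "c \<in> lists X" "length c = k" for c
  proof -
    have "map f c \<in> lists X"
      using that(1) fX by auto
    moreover have "set (map f c) \<subseteq> ?S \<union> {z}"
      by (auto simp: f_def)
    ultimately have "map f c \<in> ?W"
      using that(2) by simp
    moreover have "lenL X R c \<subseteq> lenL X R (map f c)"
      using lenL_subset_lenL_map[OF fS] fX by blast
    ultimately show ?thesis
      by blast
  qed
  then have "unionU X R k \<subseteq> \<Union> (lenL X R ` ?W)"
    unfolding unionU_eq_UN_lenL by blast
  moreover have "finite {w. set w \<subseteq> ?S \<union> {z} \<and> length w = k}"
    using assms(2) by (simp add: finite_lists_length_eq)
  then have "finite ?W"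
    by (rule finite_subset[rotated]) blast
  then have "finite (\<Union> (lenL X R ` ?W))"
    using assms(3) by simp
  ultimately show ?thesis
    by (rule finite_subset)
qed

lemma generators_nonempty_if_infinite_lenL:
  assumes "infinite (lenL X R a)"
  shows "X \<noteq> {}"
proof
  assume "X = {}"
  then have "lenL X R a \<subseteq> {0}"
    unfolding lenL_def factZ_def by auto
  with assms show False
    using finite_subset by blast
qed

lemma lenL_append_replicate:
  assumes "y \<in> X"
  shows "(\<lambda>m. m + n) ` lenL X R a \<subseteq> lenL X R (a @ replicate n y)"
proof
  fix m assume "m \<in> (\<lambda>m. m + n) ` lenL X R a"
  then obtain e where e: "e \<in> lists X" "pres_eq R e a" "m = length e + n"
    unfolding lenL_def factZ_def by auto
  then have "e @ replicate n y \<in> factZ X R (a @ replicate n y)"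
    using assms pres_eq_append unfolding factZ_def by auto
  then show "m \<in> lenL X R (a @ replicate n y)"
    unfolding lenL_def e(3) by (rule image_eqI[rotated]) simp
qed

lemma infinite_unionU_beyond:
  assumes "a \<in> lists X" and "infinite (lenL X R a)" and "length a \<le> n"
  shows "infinite (unionU X R n)"
proof -
  obtain y where "y \<in> X"
    using generators_nonempty_if_infinite_lenL[OF assms(2)] by blast
  define w where "w = a @ replicate (n - length a) y"
  have "w \<in> lists X" "length w = n"
    using assms(1,3) \<open>y \<in> X\<close> unfolding w_def by auto
  have "infinite ((\<lambda>m. m + (n - length a)) ` lenL X R a)"
    using assms(2) finite_imageD inj_on_add' by blast
  then have "infinite (lenL X R w)"
    using lenL_append_replicate[OF \<open>y \<in> X\<close>, of "n - length a" R a] finite_subset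
    unfolding w_def by blast
  moreover have "lenL X R w \<subseteq> unionU X R n"
    using \<open>w \<in> lists X\<close> \<open>length w = n\<close> unfolding unionU_eq_UN_lenL by blast
  ultimately show ?thesis
    using finite_subset by blast
qed

theorem proposition4p4:
  fixes X :: "'x set" and R :: "('x list \<times> 'x list) set"
  assumes "R \<subseteq> lists X \<times> lists X"
    and "finite {x \<in> X. \<exists>a \<in> lists X. \<exists>b \<in> lists X. \<exists>c \<in> lists X.
                 (a @ [x] @ b, c) \<in> R \<or> (c, a @ [x] @ b) \<in> R}"
  shows "((\<exists>a \<in> lists X. infinite (factZ X R a)) \<longleftrightarrow> (\<exists>a \<in> lists X. infinite (lenL X R a)))
       \<and> ((\<exists>a \<in> lists X. infinite (lenL X R a)) \<longleftrightarrow> (\<exists>k::nat. infinite (unionU X R k)))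
       \<and> ((\<exists>k::nat. infinite (unionU X R k)) \<longleftrightarrow> (\<exists>k::nat. \<forall>n\<ge>k. infinite (unionU X R n)))"
proof -
  have letters: "rel_letters R \<subseteq> X" "finite (rel_letters R)"
    using rel_letters_subset[OF assms(1)] finite_subset[OF _ assms(2)] by auto
  have Z_L: "(\<exists>a \<in> lists X. infinite (factZ X R a)) \<longleftrightarrow> (\<exists>a \<in> lists X. infinite (lenL X R a))"
    by (simp add: finite_factZ_iff_finite_lenL[OF letters(2)])
  have L_U: "\<exists>k. \<forall>n\<ge>k. infinite (unionU X R n)" if "a \<in> lists X" "infinite (lenL X R a)" for a
    using infinite_unionU_beyond[OF that] by blast
  have U_L: "\<exists>a \<in> lists X. infinite (lenL X R a)" if "infinite (unionU X R k)" for k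
    using finite_unionU[OF letters] that by blast
  show ?thesis
  proof (intro conjI iffI)
    show "\<exists>k. infinite (unionU X R k)" if "\<exists>k. \<forall>n\<ge>k. infinite (unionU X R n)"
      using that by blast
  qed (use Z_L L_U U_L in blast)+
qed

end
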